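(* Let $0<\alpha<\pi/4$, $\beta=\pi/4$, and let $F,G_1,G_2$, $X_{\pm\pm}$, $s_{\max}$, $v$ be as in the context. Let $\theta(\alpha)=\arcsin\left(\frac{-2\sqrt2\sin\alpha\cos\alpha}{1+\cos^2\alpha}\right)$ and write $c=\cos\theta(\alpha)$, $\sigma=\sin\theta(\alpha)$. Then $$e^{v(s_{\max})X_{++}}=\begin{pmatrix}0&-1&0\\ c&0&\sigma\\ -\sigma&0&c\end{pmatrix},\quad e^{v(s_{\max})X_{+-}}=\begin{pmatrix}0&-c&-\sigma\\ 1&0&0\\ 0&-\sigma&c\end{pmatrix},$$ $$e^{v(s_{\max})X_{--}}=\begin{pmatrix}0&-1&0\\ c&0&-\sigma\\ \sigma&0&c\end{pmatrix},\quad e^{v(s_{\max})X_{-+}}=\begin{pmatrix}0&-c&\sigma\\ 1&0&0\\ 0&\sigma&c\end{pmatrix}.$$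
   Context: $F=\cos\alpha\begin{pmatrix}0&-1&0\\1&0&0\\0&0&0\end{pmatrix}$, $G_1=\sin\alpha\sin\beta\begin{pmatrix}0&0&0\\0&0&-1\\0&1&0\end{pmatrix}$, $G_2=\sin\alpha\cos\beta\begin{pmatrix}0&0&-1\\0&0&0\\1&0&0\end{pmatrix}$, and $X_{ab}=F+aG_1+bG_2$ for $a,b\in\{+1,-1\}$ (written $X_{++},X_{+-},X_{--},X_{-+}$). $s_{\max}=\arccos\left(-\frac{\sin^2\alpha}{1+\cos^2\alpha}\right)$. For $s\in[0,s_{\max}]$, $v(s)=\arccos\left[\frac{d-A(s)-B(s)-C(s)}{e-A(s)+B(s)}\right]$ with $A(s)=8\cos\alpha\sin^2\alpha\sin s$, $B(s)=2\sin^2(2\alpha)\cos s$, $C(s)=4\sin^4\alpha\cos(2s)$, $d=\sin^2(2\alpha)$, $e=5+2\cos2\alpha+\cos4\alpha$; this is the duration of interior bang arcs of normal extremals of $\dot x=(F+u_1G_1+u_2G_2)x$ on $S^2$ starting from $(0,0,1)$ whose first bang arc has duration $s$. *)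

theory Defs
  imports "HOL-Analysis.Analysis"
begin

text \<open>3x3 real matrices are rendered as real^3^3 (row-major: A $ i $ j is row i, column j).
  Matrix product is (**), identity is mat 1.\<close>

fun mat_pow :: "real^3^3 \<Rightarrow> nat \<Rightarrow> real^3^3" where
  "mat_pow A 0 = mat 1"
| "mat_pow A (Suc k) = A ** mat_pow A k"

definition mat_exp :: "real^3^3 \<Rightarrow> real^3^3" where
  "mat_exp A = (\<Sum>k. (1 / fact k) *\<^sub>R mat_pow A k)"

definition mat3 :: "real \<Rightarrow> real \<Rightarrow> real \<Rightarrow> real \<Rightarrow> real \<Rightarrow> real \<Rightarrow> real \<Rightarrow> real \<Rightarrow> real \<Rightarrow> real^3^3" where
  "mat3 a11 a12 a13 a21 a22 a23 a31 a32 a33 =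
     vector [vector [a11, a12, a13], vector [a21, a22, a23], vector [a31, a32, a33]]"

definition Fm :: "real \<Rightarrow> real^3^3" where
  "Fm \<alpha> = cos \<alpha> *\<^sub>R mat3 0 (-1) 0  1 0 0  0 0 0"

definition G1m :: "real \<Rightarrow> real \<Rightarrow> real^3^3" where
  "G1m \<alpha> \<beta> = (sin \<alpha> * sin \<beta>) *\<^sub>R mat3 0 0 0  0 0 (-1)  0 1 0"

definition G2m :: "real \<Rightarrow> real \<Rightarrow> real^3^3" where
  "G2m \<alpha> \<beta> = (sin \<alpha> * cos \<beta>) *\<^sub>R mat3 0 0 (-1)  0 0 0  1 0 0"

definition Xm :: "real \<Rightarrow> real \<Rightarrow> real \<Rightarrow> real \<Rightarrow> real^3^3" where
  "Xm \<alpha> \<beta> a b = Fm \<alpha> + a *\<^sub>R G1m \<alpha> \<beta> + b *\<^sub>R G2m \<alpha> \<beta>"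

definition s_max :: "real \<Rightarrow> real" where
  "s_max \<alpha> = arccos (- (sin \<alpha>)\<^sup>2 / (1 + (cos \<alpha>)\<^sup>2))"

definition vA :: "real \<Rightarrow> real \<Rightarrow> real" where
  "vA \<alpha> s = 8 * cos \<alpha> * (sin \<alpha>)\<^sup>2 * sin s"
definition vB :: "real \<Rightarrow> real \<Rightarrow> real" where
  "vB \<alpha> s = 2 * (sin (2 * \<alpha>))\<^sup>2 * cos s"
definition vC :: "real \<Rightarrow> real \<Rightarrow> real" where
  "vC \<alpha> s = 4 * (sin \<alpha>) ^ 4 * cos (2 * s)"
definition vd :: "real \<Rightarrow> real" where
  "vd \<alpha> = (sin (2 * \<alpha>))\<^sup>2"
definition ve :: "real \<Rightarrow> real" where
  "ve \<alpha> = 5 + 2 * cos (2 * \<alpha>) + cos (4 * \<alpha>)"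

definition v :: "real \<Rightarrow> real \<Rightarrow> real" where
  "v \<alpha> s = arccos ((vd \<alpha> - vA \<alpha> s - vB \<alpha> s - vC \<alpha> s) / (ve \<alpha> - vA \<alpha> s + vB \<alpha> s))"

definition theta :: "real \<Rightarrow> real" where
  "theta \<alpha> = arcsin (- 2 * sqrt 2 * sin \<alpha> * cos \<alpha> / (1 + (cos \<alpha>)\<^sup>2))"

end

theory Submission
  imports Defs
begin

text \<open>Each \<open>X\<^sub>a\<^sub>b\<close> is the cross-product matrix of a unit vector, so \<open>X\<^sup>3 = -X\<close> and the exponential
  series collapses to Rodrigues' rotation formula \<open>e\<^sup>t\<^sup>X = I + sin t X + (1 - cos t) X\<^sup>2\<close>.
  The only non-obvious input is that the interior arc has the same length as the first one,
  \<open>v(s\<^sub>m\<^sub>a\<^sub>x) = s\<^sub>m\<^sub>a\<^sub>x\<close>; hence \<open>cos t = -sin\<^sup>2\<alpha> / (1 + cos\<^sup>2\<alpha>)\<close> and \<open>sin t = 2 cos \<alpha> / (1 + cos\<^sup>2\<alpha>)\<close>,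
  while \<open>cos \<theta> = (3 cos\<^sup>2\<alpha> - 1) / (1 + cos\<^sup>2\<alpha>)\<close>.\<close>

lemma mat_pow_scaleR: "mat_pow (t *\<^sub>R X) k = t ^ k *\<^sub>R mat_pow X k"
  by (induction k) (simp_all add: scalar_matrix_assoc[symmetric] matrix_scalar_ac)

lemma mat_pow_cube_neg:
  assumes cube: "X ** (X ** X) = - X"
  shows "mat_pow X (2 * m + 1) = (-1) ^ m *\<^sub>R X \<and> mat_pow X (2 * m + 2) = (-1) ^ m *\<^sub>R (X ** X)"
proof (induction m)
  case 0
  then show ?case by simp
next
  case (Suc m)
  have unfold: "2 * Suc m + 1 = Suc (Suc (2 * m + 1))" "2 * Suc m + 2 = Suc (Suc (2 * m + 2))"
    by simp_all
  have "mat_pow X (2 * Suc m + 1) = X ** (X ** ((-1) ^ m *\<^sub>R X))"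
    by (simp only: unfold(1) mat_pow.simps(2) conjunct1[OF Suc.IH])
  also have "\<dots> = (-1) ^ Suc m *\<^sub>R X"
    using cube by (simp add: matrix_scalar_ac scalar_matrix_assoc[symmetric])
  finally have odd: "mat_pow X (2 * Suc m + 1) = (-1) ^ Suc m *\<^sub>R X" .
  have "mat_pow X (2 * Suc m + 2) = X ** (X ** ((-1) ^ m *\<^sub>R (X ** X)))"
    by (simp only: unfold(2) mat_pow.simps(2) conjunct2[OF Suc.IH])
  also have "\<dots> = (-1) ^ m *\<^sub>R ((X ** (X ** X)) ** X)"
    by (simp add: matrix_scalar_ac scalar_matrix_assoc[symmetric] matrix_mul_assoc)
  also have "\<dots> = (-1) ^ Suc m *\<^sub>R (X ** X)"
    using cube by (simp add: matrix_matrix_mult_def vec_eq_iff sum_negf)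
  finally show ?case using odd by simp
qed

lemma mat_exp_term_cube_neg:
  assumes cube: "X ** (X ** X) = - X"
  shows "(1 / fact k) *\<^sub>R mat_pow (t *\<^sub>R X) k =
     (if k = 0 then 1 else 0) *\<^sub>R mat 1 + (sin_coeff k * t ^ k) *\<^sub>R X
     + ((if k = 0 then 1 else 0) - cos_coeff k * t ^ k) *\<^sub>R (X ** X)"
proof -
  have "k = 0 \<or> (\<exists>m. k = 2 * m + 1) \<or> (\<exists>m. k = 2 * m + 2)" by presburger
  then consider "k = 0" | m where "k = 2 * m + 1" | m where "k = 2 * m + 2" by blast
  then show ?thesis
  proof cases
    case 1
    then show ?thesis by (simp add: sin_coeff_def cos_coeff_def)
  next
    case 2
    have "mat_pow X k = (-1) ^ m *\<^sub>R X"
      unfolding 2 using mat_pow_cube_neg[OF cube, of m] by blast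
    moreover have "sin_coeff k = (-1) ^ m / fact k" "cos_coeff k = 0"
      using 2 by (simp_all add: sin_coeff_def cos_coeff_def)
    ultimately show ?thesis unfolding mat_pow_scaleR using 2 by simp
  next
    case 3
    have "mat_pow X k = (-1) ^ m *\<^sub>R (X ** X)"
      unfolding 3 using mat_pow_cube_neg[OF cube, of m] by blast
    moreover have "(2 * m + 2) div 2 = Suc m" by simp
    then have "sin_coeff k = 0" "cos_coeff k = - ((-1) ^ m / fact k)"
      using 3 by (simp_all add: sin_coeff_def cos_coeff_def)
    ultimately show ?thesis unfolding mat_pow_scaleR using 3 by simp
  qed
qed

lemma mat_exp_cube_neg:
  assumes "X ** (X ** X) = - X"
  shows "mat_exp (t *\<^sub>R X) = mat 1 + sin t *\<^sub>R X + (1 - cos t) *\<^sub>R (X ** X)"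
proof -
  have delta: "(\<lambda>k. (if k = 0 then 1 else 0) *\<^sub>R (mat 1 :: real^3^3)) = (\<lambda>k. if k = 0 then mat 1 else 0)"
    by auto
  have one: "(\<lambda>k. (if k = 0 then 1 else 0) *\<^sub>R (mat 1 :: real^3^3)) sums mat 1"
    unfolding delta by (rule sums_single)
  have sin: "(\<lambda>k. (sin_coeff k * t ^ k) *\<^sub>R X) sums (sin t *\<^sub>R X)"
    using sums_scaleR_left[OF sin_converges[of t]] by simp
  have "(\<lambda>k. (if k = 0 then 1 else 0) :: real) sums 1"
    using sums_single[of 0 "\<lambda>_. 1 :: real"] by simp
  then have cos: "(\<lambda>k. ((if k = 0 then 1 else 0) - cos_coeff k * t ^ k) *\<^sub>R (X ** X))
      sums ((1 - cos t) *\<^sub>R (X ** X))"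
    using sums_scaleR_left[OF sums_diff[OF _ cos_converges[of t]]] by simp
  have "(\<lambda>k. (1 / fact k) *\<^sub>R mat_pow (t *\<^sub>R X) k)
      sums (mat 1 + sin t *\<^sub>R X + (1 - cos t) *\<^sub>R (X ** X))"
    unfolding mat_exp_term_cube_neg[OF assms] by (intro sums_add one sin cos)
  then show ?thesis unfolding mat_exp_def by (rule sums_unique[symmetric])
qed

lemma mat3_eq_iff:
  "mat3 a11 a12 a13 a21 a22 a23 a31 a32 a33 = mat3 b11 b12 b13 b21 b22 b23 b31 b32 b33 \<longleftrightarrow>
   a11 = b11 \<and> a12 = b12 \<and> a13 = b13 \<and> a21 = b21 \<and> a22 = b22 \<and> a23 = b23 \<and>
   a31 = b31 \<and> a32 = b32 \<and> a33 = b33"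
  by (auto simp: mat3_def vec_eq_iff forall_3)

lemma mat3_mult:
  "mat3 a11 a12 a13 a21 a22 a23 a31 a32 a33 ** mat3 b11 b12 b13 b21 b22 b23 b31 b32 b33 =
   mat3 (a11*b11+a12*b21+a13*b31) (a11*b12+a12*b22+a13*b32) (a11*b13+a12*b23+a13*b33)
        (a21*b11+a22*b21+a23*b31) (a21*b12+a22*b22+a23*b32) (a21*b13+a22*b23+a23*b33)
        (a31*b11+a32*b21+a33*b31) (a31*b12+a32*b22+a33*b32) (a31*b13+a32*b23+a33*b33)"
  by (simp add: mat3_def vec_eq_iff forall_3 matrix_matrix_mult_def sum_3)

lemma mat3_add:
  "mat3 a11 a12 a13 a21 a22 a23 a31 a32 a33 + mat3 b11 b12 b13 b21 b22 b23 b31 b32 b33 =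
   mat3 (a11+b11) (a12+b12) (a13+b13) (a21+b21) (a22+b22) (a23+b23) (a31+b31) (a32+b32) (a33+b33)"
  by (simp add: mat3_def vec_eq_iff forall_3)

lemma scaleR_mat3:
  "k *\<^sub>R mat3 a11 a12 a13 a21 a22 a23 a31 a32 a33 =
   mat3 (k*a11) (k*a12) (k*a13) (k*a21) (k*a22) (k*a23) (k*a31) (k*a32) (k*a33)"
  by (simp add: mat3_def vec_eq_iff forall_3)

lemma uminus_mat3:
  "- mat3 a11 a12 a13 a21 a22 a23 a31 a32 a33 =
   mat3 (-a11) (-a12) (-a13) (-a21) (-a22) (-a23) (-a31) (-a32) (-a33)"
  by (simp add: mat3_def vec_eq_iff forall_3)

lemma mat_1_eq_mat3: "(mat 1 :: real^3^3) = mat3 1 0 0 0 1 0 0 0 1"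
  by (simp add: mat3_def vec_eq_iff forall_3 mat_def)

text \<open>The matrix of \<open>w \<mapsto> (x, y, z) \<times> w\<close>.\<close>
definition skew3 :: "real \<Rightarrow> real \<Rightarrow> real \<Rightarrow> real^3^3" where
  "skew3 x y z = mat3 0 (- z) y  z 0 (- x)  (- y) x 0"

lemma skew3_square:
  assumes "x\<^sup>2 + y\<^sup>2 + z\<^sup>2 = 1"
  shows "skew3 x y z ** skew3 x y z =
    mat3 (x\<^sup>2 - 1) (x * y) (x * z)  (x * y) (y\<^sup>2 - 1) (y * z)  (x * z) (y * z) (z\<^sup>2 - 1)"
  using assms unfolding skew3_def mat3_mult mat3_eq_iff
  by (simp add: power2_eq_square algebra_simps)

lemma skew3_cube:
  assumes "x\<^sup>2 + y\<^sup>2 + z\<^sup>2 = 1"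
  shows "skew3 x y z ** (skew3 x y z ** skew3 x y z) = - skew3 x y z"
  unfolding skew3_square[OF assms]
  by (simp add: skew3_def mat3_mult uminus_mat3 mat3_eq_iff power2_eq_square algebra_simps)

lemma mat_exp_skew3:
  assumes "x\<^sup>2 + y\<^sup>2 + z\<^sup>2 = 1"
  shows "mat_exp (t *\<^sub>R skew3 x y z) = mat3
    (cos t + (1 - cos t) * x\<^sup>2) ((1 - cos t) * x * y - sin t * z) ((1 - cos t) * x * z + sin t * y)
    ((1 - cos t) * x * y + sin t * z) (cos t + (1 - cos t) * y\<^sup>2) ((1 - cos t) * y * z - sin t * x)
    ((1 - cos t) * x * z - sin t * y) ((1 - cos t) * y * z + sin t * x) (cos t + (1 - cos t) * z\<^sup>2)"
  unfolding mat_exp_cube_neg[OF skew3_cube[OF assms]] skew3_square[OF assms]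
  by (simp add: skew3_def mat_1_eq_mat3 scaleR_mat3 mat3_add mat3_eq_iff algebra_simps)

lemma Xm_quarter_eq_skew3:
  "Xm \<alpha> (pi / 4) a b = skew3 (a * (sin \<alpha> * sqrt 2 / 2)) (- b * (sin \<alpha> * sqrt 2 / 2)) (cos \<alpha>)"
  by (simp add: Xm_def Fm_def G1m_def G2m_def skew3_def sin_45 cos_45 scaleR_mat3 mat3_add
      mat3_eq_iff)

lemma half_less_cos_squared:
  fixes \<alpha> :: real
  assumes "\<bar>\<alpha>\<bar> < pi / 4"
  shows "1 / 2 < (cos \<alpha>)\<^sup>2"
proof -
  have "sqrt 2 / 2 < cos \<bar>\<alpha>\<bar>"
    using assms cos_monotone_0_pi[of "\<bar>\<alpha>\<bar>" "pi / 4"] by (simp add: cos_45)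
  then have "(sqrt 2 / 2)\<^sup>2 < (cos \<alpha>)\<^sup>2"
    by (intro power_strict_mono) auto
  then show ?thesis by (simp add: power_divide)
qed

lemma s_max_arg_bounds:
  fixes \<alpha> :: real
  shows "- 1 \<le> - (sin \<alpha>)\<^sup>2 / (1 + (cos \<alpha>)\<^sup>2)" "- (sin \<alpha>)\<^sup>2 / (1 + (cos \<alpha>)\<^sup>2) \<le> 1"
proof -
  have pos: "0 < 1 + (cos \<alpha>)\<^sup>2" using zero_le_power2[of "cos \<alpha>"] by linarith
  have "(sin \<alpha>)\<^sup>2 \<le> 1 + (cos \<alpha>)\<^sup>2"
    using sin_cos_squared_add[of \<alpha>] zero_le_power2[of "cos \<alpha>"] by linarith
  then have "(sin \<alpha>)\<^sup>2 / (1 + (cos \<alpha>)\<^sup>2) \<le> 1" using divide_le_eq_1_pos[OF pos] by blast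
  moreover have "0 \<le> (sin \<alpha>)\<^sup>2 / (1 + (cos \<alpha>)\<^sup>2)" using pos by (intro divide_nonneg_pos) auto
  ultimately show "- 1 \<le> - (sin \<alpha>)\<^sup>2 / (1 + (cos \<alpha>)\<^sup>2)" "- (sin \<alpha>)\<^sup>2 / (1 + (cos \<alpha>)\<^sup>2) \<le> 1"
    by linarith+
qed

lemma cos_s_max: "cos (s_max \<alpha>) = - (sin \<alpha>)\<^sup>2 / (1 + (cos \<alpha>)\<^sup>2)"
  unfolding s_max_def using s_max_arg_bounds by (rule cos_arccos)

lemma sin_s_max:
  assumes "0 \<le> cos \<alpha>"
  shows "sin (s_max \<alpha>) = 2 * cos \<alpha> / (1 + (cos \<alpha>)\<^sup>2)"
proof -
  have pos: "0 < 1 + (cos \<alpha>)\<^sup>2" using zero_le_power2[of "cos \<alpha>"] by linarith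
  have key: "(2 * c / (1 + c\<^sup>2))\<^sup>2 = 1 - (- (1 - c\<^sup>2) / (1 + c\<^sup>2))\<^sup>2" for c :: real
  proof -
    have "1 + c\<^sup>2 \<noteq> 0" using zero_le_power2[of c] by linarith
    then show ?thesis
      by (simp add: power_divide field_simps) (simp add: power2_eq_square algebra_simps)
  qed
  have "sin (s_max \<alpha>) = sqrt (1 - (- (sin \<alpha>)\<^sup>2 / (1 + (cos \<alpha>)\<^sup>2))\<^sup>2)"
    unfolding s_max_def using s_max_arg_bounds by (rule sin_arccos)
  also have "\<dots> = 2 * cos \<alpha> / (1 + (cos \<alpha>)\<^sup>2)"
    unfolding sin_squared_eq by (rule real_sqrt_unique[OF key]) (use assms pos in simp)
  finally show ?thesis .
qed

lemma v_s_max: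
  fixes \<alpha> :: real
  assumes "0 \<le> cos \<alpha>" and "3 * (cos \<alpha>)\<^sup>2 \<noteq> 1"
  shows "v \<alpha> (s_max \<alpha>) = s_max \<alpha>"
proof -
  define c s where "c = cos \<alpha>" and "s = sin \<alpha>"
  \<comment> \<open>With \<open>w = 1 / (1 + c\<^sup>2)\<close> every claim becomes a polynomial identity modulo
    \<open>s\<^sup>2 + c\<^sup>2 = 1\<close> and \<open>w (1 + c\<^sup>2) = 1\<close>, which \<open>algebra\<close> decides.\<close>
  define w where "w = 1 / (1 + c\<^sup>2)"
  have P: "1 + c\<^sup>2 > 0" using zero_le_power2[of c] by linarith
  then have w: "w * (1 + c\<^sup>2) = 1" by (simp add: w_def)
  have pyth: "s\<^sup>2 + c\<^sup>2 = 1" unfolding s_def c_def by (rule sin_cos_squared_add)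
  have trig: "sin (2 * \<alpha>) = 2 * s * c" "cos (2 * \<alpha>) = 2 * c\<^sup>2 - 1"
      "cos (4 * \<alpha>) = 2 * (2 * c\<^sup>2 - 1)\<^sup>2 - 1"
      "cos (s_max \<alpha>) = - s\<^sup>2 * w" "sin (s_max \<alpha>) = 2 * c * w"
      "cos (2 * s_max \<alpha>) = 2 * (- s\<^sup>2 * w)\<^sup>2 - 1"
    using cos_double_cos[of "2 * \<alpha>"] sin_s_max[OF assms(1)]
    by (simp_all add: c_def s_def w_def sin_double cos_double_cos cos_s_max)
  have den: "ve \<alpha> - vA \<alpha> (s_max \<alpha>) + vB \<alpha> (s_max \<alpha>) = 4 * (3 * c\<^sup>2 - 1)\<^sup>2 * w"
    unfolding ve_def vA_def vB_def trig s_def[symmetric] c_def[symmetric]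
    using w pyth by algebra
  have num: "vd \<alpha> - vA \<alpha> (s_max \<alpha>) - vB \<alpha> (s_max \<alpha>) - vC \<alpha> (s_max \<alpha>)
      = - s\<^sup>2 * w * (4 * (3 * c\<^sup>2 - 1)\<^sup>2 * w)"
    unfolding vd_def vA_def vB_def vC_def trig s_def[symmetric] c_def[symmetric]
    using w pyth by algebra
  have "4 * (3 * c\<^sup>2 - 1)\<^sup>2 * w \<noteq> 0" using P assms(2) by (simp add: c_def w_def)
  then have "v \<alpha> (s_max \<alpha>) = arccos (- s\<^sup>2 * w)" unfolding v_def den num by simp
  then show ?thesis unfolding s_max_def w_def s_def c_def by simp
qed

lemma theta_arg_identity:
  fixes \<alpha> :: real
  shows "1 - (- 2 * sqrt 2 * sin \<alpha> * cos \<alpha> / (1 + (cos \<alpha>)\<^sup>2))\<^sup>2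
    = ((3 * (cos \<alpha>)\<^sup>2 - 1) / (1 + (cos \<alpha>)\<^sup>2))\<^sup>2"
proof -
  define c s where "c = cos \<alpha>" and "s = sin \<alpha>"
  define w where "w = 1 / (1 + c\<^sup>2)"
  have "1 + c\<^sup>2 > 0" using zero_le_power2[of c] by linarith
  then have w: "w * (1 + c\<^sup>2) = 1" by (simp add: w_def)
  have pyth: "s\<^sup>2 + c\<^sup>2 = 1" unfolding s_def c_def by (rule sin_cos_squared_add)
  have "(- 2 * sqrt 2 * s * c * w)\<^sup>2 = 8 * s\<^sup>2 * c\<^sup>2 * w\<^sup>2"
    by (simp add: power_mult_distrib)
  moreover have "1 - 8 * s\<^sup>2 * c\<^sup>2 * w\<^sup>2 = ((3 * c\<^sup>2 - 1) * w)\<^sup>2"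
    using w pyth by algebra
  ultimately have "1 - (- 2 * sqrt 2 * s * c * w)\<^sup>2 = ((3 * c\<^sup>2 - 1) * w)\<^sup>2" by simp
  then show ?thesis by (simp add: c_def s_def w_def)
qed

lemma theta_arg_bounds:
  fixes \<alpha> :: real
  shows "- 1 \<le> - 2 * sqrt 2 * sin \<alpha> * cos \<alpha> / (1 + (cos \<alpha>)\<^sup>2)"
    and "- 2 * sqrt 2 * sin \<alpha> * cos \<alpha> / (1 + (cos \<alpha>)\<^sup>2) \<le> 1"
proof -
  have "(- 2 * sqrt 2 * sin \<alpha> * cos \<alpha> / (1 + (cos \<alpha>)\<^sup>2))\<^sup>2 \<le> 1"
    using theta_arg_identity[of \<alpha>] zero_le_power2[of "(3 * (cos \<alpha>)\<^sup>2 - 1) / (1 + (cos \<alpha>)\<^sup>2)"]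
    by linarith
  then show "- 1 \<le> - 2 * sqrt 2 * sin \<alpha> * cos \<alpha> / (1 + (cos \<alpha>)\<^sup>2)"
    and "- 2 * sqrt 2 * sin \<alpha> * cos \<alpha> / (1 + (cos \<alpha>)\<^sup>2) \<le> 1"
    unfolding abs_square_le_1 abs_le_iff by linarith+
qed

lemma sin_theta: "sin (theta \<alpha>) = - 2 * sqrt 2 * sin \<alpha> * cos \<alpha> / (1 + (cos \<alpha>)\<^sup>2)"
  unfolding theta_def using theta_arg_bounds by (rule sin_arcsin)

lemma cos_theta:
  assumes "1 \<le> 3 * (cos \<alpha>)\<^sup>2"
  shows "cos (theta \<alpha>) = (3 * (cos \<alpha>)\<^sup>2 - 1) / (1 + (cos \<alpha>)\<^sup>2)"
proof -
  have "cos (theta \<alpha>) = sqrt (1 - (- 2 * sqrt 2 * sin \<alpha> * cos \<alpha> / (1 + (cos \<alpha>)\<^sup>2))\<^sup>2)"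
    unfolding theta_def using theta_arg_bounds by (rule cos_arcsin)
  also have "\<dots> = (3 * (cos \<alpha>)\<^sup>2 - 1) / (1 + (cos \<alpha>)\<^sup>2)"
    unfolding theta_arg_identity using assms zero_le_power2[of "cos \<alpha>"]
    by (intro real_sqrt_unique divide_nonneg_pos) auto
  finally show ?thesis .
qed

lemma mat_exp_Xm_quarter:
  fixes \<alpha> a b :: real
  assumes "\<bar>\<alpha>\<bar> < pi / 4" and "a\<^sup>2 = 1" and "b\<^sup>2 = 1"
  defines "c \<equiv> cos (theta \<alpha>)" and "\<sigma> \<equiv> sin (theta \<alpha>)"
  shows "mat_exp (v \<alpha> (s_max \<alpha>) *\<^sub>R Xm \<alpha> (pi / 4) a b) = mat3
    0  (- ((1 + a * b) / 2 + (1 - a * b) / 2 * c))  ((b - a) / 2 * \<sigma>)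
    ((1 + a * b) / 2 * c + (1 - a * b) / 2)  0  ((a + b) / 2 * \<sigma>)
    (- (a + b) / 2 * \<sigma>)  ((b - a) / 2 * \<sigma>)  c"
proof -
  define co q where "co = cos \<alpha>" and "q = sin \<alpha> * sqrt 2 / 2"
  define w where "w = 1 / (1 + co\<^sup>2)"
  have "1 + co\<^sup>2 > 0" using zero_le_power2[of co] by linarith
  then have w: "w * (1 + co\<^sup>2) = 1" by (simp add: w_def)
  have "(sin \<alpha>)\<^sup>2 = 1 - co\<^sup>2" unfolding co_def by (rule sin_squared_eq)
  then have unit: "co\<^sup>2 + 2 * q\<^sup>2 = 1"
    by (simp add: q_def power_mult_distrib power_divide) (simp add: diff_divide_distrib)
  have half: "1 / 2 < co\<^sup>2" unfolding co_def using assms(1) by (rule half_less_cos_squared)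
  have cos_nonneg: "0 \<le> cos \<alpha>" using assms(1) by (intro cos_ge_zero) auto
  then have t: "v \<alpha> (s_max \<alpha>) = s_max \<alpha>" using half by (intro v_s_max) (auto simp: co_def)
  have cos_t: "cos (v \<alpha> (s_max \<alpha>)) = - 2 * q\<^sup>2 * w"
    and sin_t: "sin (v \<alpha> (s_max \<alpha>)) = 2 * co * w"
    unfolding t cos_s_max sin_s_max[OF cos_nonneg]
    by (simp_all add: co_def q_def w_def power_mult_distrib power_divide)
  have cos_sq: "1 \<le> 3 * (cos \<alpha>)\<^sup>2" using half unfolding co_def by linarith
  have c: "c = (3 * co\<^sup>2 - 1) * w" and \<sigma>: "\<sigma> = - 4 * q * co * w"
    unfolding c_def \<sigma>_def cos_theta[OF cos_sq] sin_theta
    by (simp_all add: co_def q_def w_def)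
  have unit_ab: "(a * q)\<^sup>2 + (- b * q)\<^sup>2 + co\<^sup>2 = 1"
    using assms(2,3) unit by (simp add: power_mult_distrib)
  show ?thesis
    unfolding Xm_quarter_eq_skew3 q_def[symmetric] co_def[symmetric]
      mat_exp_skew3[OF unit_ab] cos_t sin_t c \<sigma> mat3_eq_iff
    using assms(2,3) unit w by (intro conjI; algebra)
qed

theorem lemma11:
  fixes \<alpha> :: real
  assumes "0 < \<alpha>" and "\<alpha> < pi / 4"
  defines "c \<equiv> cos (theta \<alpha>)" and "\<sigma> \<equiv> sin (theta \<alpha>)"
      and "t \<equiv> v \<alpha> (s_max \<alpha>)"
  shows "mat_exp (t *\<^sub>R Xm \<alpha> (pi / 4) 1 1) = mat3 0 (-1) 0  c 0 \<sigma>  (-\<sigma>) 0 c \<and>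
         mat_exp (t *\<^sub>R Xm \<alpha> (pi / 4) 1 (-1)) = mat3 0 (-c) (-\<sigma>)  1 0 0  0 (-\<sigma>) c \<and>
         mat_exp (t *\<^sub>R Xm \<alpha> (pi / 4) (-1) (-1)) = mat3 0 (-1) 0  c 0 (-\<sigma>)  \<sigma> 0 c \<and>
         mat_exp (t *\<^sub>R Xm \<alpha> (pi / 4) (-1) 1) = mat3 0 (-c) \<sigma>  1 0 0  0 \<sigma> c"
proof -
  have "\<bar>\<alpha>\<bar> < pi / 4" using assms(1,2) by simp
  note exp_X = mat_exp_Xm_quarter[OF this, folded c_def \<sigma>_def t_def]
  show ?thesis
    using exp_X[of 1 1] exp_X[of 1 "-1"] exp_X[of "-1" "-1"] exp_X[of "-1" 1]
    by (simp add: mat3_eq_iff)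
qed

end
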